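(* Let $0<r<\min\{\frac{d\alpha_{\min}}{2d+1},\frac{\beta_{\min}}2,e^{-4}\}$ and $J=\lfloor\frac14\log(1/r)\rfloor$. Then for every $k_0\in\mathbb Z$, the sets $g_{k_0}\widetilde\Delta'_r,\ g_{k_0+1}\widetilde\Delta'_r,\dots,g_{k_0+J}\widetilde\Delta'_r$ are pairwise disjoint.
   Context: $d=m+n$; weight vectors $\boldsymbol\alpha\in(\mathbb R_{>0})^m$, $\boldsymbol\beta\in(\mathbb R_{>0})^n$ with coordinates summing to 1; $\alpha_{\min}=\min_i\alpha_i$, $\beta_{\min}=\min_j\beta_j$. $g_s=\mathrm{diag}(e^{\alpha_1s},\dots,e^{\alpha_ms},e^{-\beta_1s},\dots,e^{-\beta_ns})$ acting on the space $X_d$ of unimodular lattices in $\mathbb R^d$. $\Delta(\Lambda)=\sup_{\mathbf v\in\Lambda\setminus\{0\}}\log(1/\|\mathbf v\|)$ (sup norm); $\mathcal H(\mathcal A)=\{\Lambda:(\Lambda\setminus\{0\})\cap\mathcal A\ne\emptyset\}$; $R_r=(1-\tfrac r{2d},1+\tfrac r{2d})\times(-\sqrt r,\sqrt r)^{d-1}$; $\Delta'_r=\Delta^{-1}[0,r]\cap\mathcal H(R_r)$; $\widetilde\Delta'_r=\bigcup_{0\le s<1/2}g_{-s}\Delta'_r$. *)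

theory Defs
  imports Complex_Main "Jordan_Normal_Form.Determinant"
begin

text \<open>Vectors in R^d are Jordan_Normal_Form vectors of dimension d (indices 0..d-1);
  indices 0..m-1 are the expanding coordinates, m..m+n-1 the contracting ones.\<close>

definition unimodular_lattices :: "nat \<Rightarrow> real vec set set" where
  "unimodular_lattices d =
     {L. \<exists>B \<in> carrier_mat d d. \<bar>det B\<bar> = 1 \<and>
          L = {B *\<^sub>v map_vec real_of_int z | z. z \<in> carrier_vec d}}"

definition gvec :: "nat \<Rightarrow> (nat \<Rightarrow> real) \<Rightarrow> (nat \<Rightarrow> real) \<Rightarrow> real \<Rightarrow> real vec \<Rightarrow> real vec" where
  "gvec m \<alpha> \<beta> s v = vec (dim_vec v)
     (\<lambda>i. if i < m then exp (\<alpha> i * s) * v $ i else exp (- (\<beta> (i - m) * s)) * v $ i)"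

definition glat :: "nat \<Rightarrow> (nat \<Rightarrow> real) \<Rightarrow> (nat \<Rightarrow> real) \<Rightarrow> real \<Rightarrow> real vec set \<Rightarrow> real vec set" where
  "glat m \<alpha> \<beta> s L = gvec m \<alpha> \<beta> s ` L"

definition supnorm :: "real vec \<Rightarrow> real" where
  "supnorm v = Max ((\<lambda>i. \<bar>v $ i\<bar>) ` {..<dim_vec v})"

definition Delta :: "real vec set \<Rightarrow> real" where
  "Delta L = (SUP v \<in> {v \<in> L. v \<noteq> 0\<^sub>v (dim_vec v)}. ln (1 / supnorm v))"

definition hits :: "real vec set \<Rightarrow> real vec set set" where
  "hits A = {L. \<exists>v \<in> L. v \<noteq> 0\<^sub>v (dim_vec v) \<and> v \<in> A}"

definition Rbox :: "nat \<Rightarrow> real \<Rightarrow> real vec set" where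
  "Rbox d r = {v \<in> carrier_vec d. 1 - r / (2 * d) < v $ 0 \<and> v $ 0 < 1 + r / (2 * d) \<and>
      (\<forall>i \<in> {1..<d}. - sqrt r < v $ i \<and> v $ i < sqrt r)}"

definition DeltaPrime :: "nat \<Rightarrow> real \<Rightarrow> real vec set set" where
  "DeltaPrime d r = {L \<in> unimodular_lattices d. 0 \<le> Delta L \<and> Delta L \<le> r} \<inter> hits (Rbox d r)"

definition DeltaTilde :: "nat \<Rightarrow> (nat \<Rightarrow> real) \<Rightarrow> (nat \<Rightarrow> real) \<Rightarrow> nat \<Rightarrow> real \<Rightarrow> real vec set set" where
  "DeltaTilde m \<alpha> \<beta> n r = (\<Union>s \<in> {0..<1/2}. glat m \<alpha> \<beta> (- s) ` DeltaPrime (m + n) r)"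

end

theory Submission
  imports Defs
begin

text \<open>A lattice in \<open>\<Delta>'\<^sub>r\<close> contains a vector \<open>w\<close> of the thin box \<open>R\<^sub>r\<close> around the first
  unit vector. If \<open>g\<^sub>k \<Delta>~'\<^sub>r\<close> and \<open>g\<^sub>l \<Delta>~'\<^sub>r\<close> met for some \<open>1 \<le> l - k \<le> log(1/r)/4\<close>, some
  lattice of \<open>\<Delta>'\<^sub>r\<close> would equal \<open>g\<^sub>-\<^sub>t L\<close> with \<open>L \<in> \<Delta>'\<^sub>r\<close> and \<open>1/2 < t \<le> log(1/r)/4 + 1/2\<close>.
  The backward flow \<open>g\<^sub>-\<^sub>t\<close> multiplies the first coordinate of \<open>w\<close> by at most \<open>exp(-\<alpha>\<^sub>0/2)\<close>,
  which by the choice of \<open>r\<close> overcomes its excess \<open>1 + r/2d\<close> with margin \<open>exp(-r)\<close>, and the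
  other coordinates, all smaller than \<open>sqrt r\<close>, by at most \<open>exp t \<le> exp(1/2) r^(-1/4)\<close>. So
  \<open>g\<^sub>-\<^sub>t w\<close> is a nonzero vector of \<open>g\<^sub>-\<^sub>t L\<close> of sup norm below \<open>exp(-r)\<close>, contradicting
  \<open>\<Delta>(g\<^sub>-\<^sub>t L) \<le> r\<close>.\<close>

lemma abs_nth_le_supnorm: "i < dim_vec v \<Longrightarrow> \<bar>v $ i\<bar> \<le> supnorm v"
  unfolding supnorm_def by (intro Max_ge) auto

lemma supnorm_less: "0 < dim_vec v \<Longrightarrow> (\<And>i. i < dim_vec v \<Longrightarrow> \<bar>v $ i\<bar> < c) \<Longrightarrow> supnorm v < c"
  unfolding supnorm_def by (subst Max_less_iff) auto

lemma supnorm_nonneg: "0 < dim_vec v \<Longrightarrow> 0 \<le> supnorm v"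
  using abs_nth_le_supnorm[of 0 v] by simp

lemma lattice_supnorm_bounded_below:
  assumes B: "B \<in> carrier_mat d d" and det: "det B \<noteq> (0::real)"
  obtains c where "0 < c"
    and "\<And>z. z \<in> carrier_vec d \<Longrightarrow> B *\<^sub>v map_vec real_of_int z \<noteq> 0\<^sub>v d \<Longrightarrow>
           c \<le> supnorm (B *\<^sub>v map_vec real_of_int z)"
proof -
  obtain A where A: "A \<in> carrier_mat d d" and AB: "A * B = 1\<^sub>m d"
    using det_non_zero_imp_unit[OF B det] by (auto simp: Units_def ring_mat_def)
  define K where "K = (\<Sum>i<d. \<Sum>j<d. \<bar>A $$ (i, j)\<bar>)"
  have "K \<ge> 0" unfolding K_def by (intro sum_nonneg) auto
  have "1 / (K + 1) \<le> supnorm v"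
    if z: "z \<in> carrier_vec d" and v: "v = B *\<^sub>v map_vec real_of_int z" and nz: "v \<noteq> 0\<^sub>v d" for z v
  proof -
    have dim: "dim_vec v = d" using B v by simp
    have Av: "A *\<^sub>v v = map_vec real_of_int z"
      using A B z AB unfolding v by (metis assoc_mult_mat_vec map_carrier_vec one_mult_mat_vec)
    have "z \<noteq> 0\<^sub>v d"
    proof
      assume "z = 0\<^sub>v d"
      then have "map_vec real_of_int z = 0\<^sub>v d" by auto
      then have "v = B *\<^sub>v 0\<^sub>v d" unfolding v by (simp only:)
      then show False using nz B by auto
    qed
    then obtain i where i: "i < d" "z $ i \<noteq> 0"
      using z by (metis carrier_vecD eq_vecI index_zero_vec)
    have "1 \<le> \<bar>real_of_int (z $ i)\<bar>" using i by linarith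
    also have "real_of_int (z $ i) = (A *\<^sub>v v) $ i" using Av i z by simp
    also have "\<dots> = (\<Sum>j<d. A $$ (i, j) * v $ j)"
      using A i dim by (simp add: scalar_prod_def lessThan_atLeast0)
    also have "\<bar>\<dots>\<bar> \<le> (\<Sum>j<d. \<bar>A $$ (i, j)\<bar> * supnorm v)"
      using dim by (intro order_trans[OF sum_abs] sum_mono)
        (auto simp: abs_mult intro!: mult_left_mono abs_nth_le_supnorm)
    also have "\<dots> \<le> K * supnorm v"
      unfolding K_def sum_distrib_right[symmetric] using i dim supnorm_nonneg[of v]
      by (intro mult_right_mono member_le_sum[where f = "\<lambda>i. \<Sum>j<d. \<bar>A $$ (i, j)\<bar>"])
        (auto intro: sum_nonneg)
    finally have "1 \<le> K * supnorm v" .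
    with \<open>K \<ge> 0\<close> supnorm_nonneg[of v] i dim show ?thesis
      by (simp add: field_simps)
  qed
  with \<open>K \<ge> 0\<close> show thesis by (intro that[of "1 / (K + 1)"]) auto
qed

lemma exp_neg_Delta_le_supnorm:
  assumes L: "L \<in> unimodular_lattices d" and u: "u \<in> L" "u \<noteq> 0\<^sub>v (dim_vec u)"
  shows "exp (- Delta L) \<le> supnorm u"
proof -
  obtain B where B: "B \<in> carrier_mat d d" "\<bar>det B\<bar> = 1"
    and L_def: "L = {B *\<^sub>v map_vec real_of_int z | z. z \<in> carrier_vec d}"
    using L unfolding unimodular_lattices_def by auto
  from B(2) have "det B \<noteq> 0" by auto
  then obtain c where "0 < c"
    and c: "\<And>z. z \<in> carrier_vec d \<Longrightarrow> B *\<^sub>v map_vec real_of_int z \<noteq> 0\<^sub>v d \<Longrightarrow>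
              c \<le> supnorm (B *\<^sub>v map_vec real_of_int z)"
    using lattice_supnorm_bounded_below[OF B(1)] by blast
  have short: "c \<le> supnorm v" if v: "v \<in> L" "v \<noteq> 0\<^sub>v (dim_vec v)" for v
  proof -
    obtain z where "z \<in> carrier_vec d" "v = B *\<^sub>v map_vec real_of_int z"
      using v(1) unfolding L_def by blast
    with v(2) B(1) show ?thesis using c by simp
  qed
  have "ln (1 / supnorm v) \<le> - ln c" if "v \<in> L" "v \<noteq> 0\<^sub>v (dim_vec v)" for v
    using short[OF that] \<open>0 < c\<close> by (simp add: ln_div)
  then have "bdd_above ((\<lambda>v. ln (1 / supnorm v)) ` {v \<in> L. v \<noteq> 0\<^sub>v (dim_vec v)})"
    by (intro bdd_aboveI[of _ "- ln c"]) blast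
  then have "ln (1 / supnorm u) \<le> Delta L"
    unfolding Delta_def using u by (intro cSUP_upper) auto
  moreover have "0 < supnorm u" using short[OF u] \<open>0 < c\<close> by linarith
  ultimately have "- Delta L \<le> ln (supnorm u)" by (simp add: ln_div)
  with \<open>0 < supnorm u\<close> show ?thesis by (metis exp_le_cancel_iff exp_ln)
qed

lemma dim_gvec [simp]: "dim_vec (gvec m \<alpha> \<beta> s v) = dim_vec v"
  unfolding gvec_def by simp

lemma gvec_add: "gvec m \<alpha> \<beta> a (gvec m \<alpha> \<beta> b v) = gvec m \<alpha> \<beta> (a + b) v"
  unfolding gvec_def
  by (intro eq_vecI) (simp_all add: ring_distribs flip: mult.assoc exp_add)

lemma gvec_0 [simp]: "gvec m \<alpha> \<beta> 0 v = v"
  unfolding gvec_def by (intro eq_vecI) auto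

lemma glat_add: "glat m \<alpha> \<beta> a (glat m \<alpha> \<beta> b L) = glat m \<alpha> \<beta> (a + b) L"
  unfolding glat_def image_image gvec_add ..

lemma glat_0 [simp]: "glat m \<alpha> \<beta> 0 L = L"
  unfolding glat_def by simp

lemma abs_gvec_neg_nth_le:
  assumes "i < dim_vec v" "0 \<le> t" "i < m \<Longrightarrow> 0 \<le> \<alpha> i" "m \<le> i \<Longrightarrow> \<beta> (i - m) \<le> 1"
  shows "\<bar>gvec m \<alpha> \<beta> (- t) v $ i\<bar> \<le> exp t * \<bar>v $ i\<bar>"
proof (cases "i < m")
  case True
  then have "0 \<le> \<alpha> i * t" using assms(2,3) by simp
  then have "exp (\<alpha> i * - t) \<le> exp t" using assms(2) by simp
  with True assms(1) show ?thesis by (simp add: gvec_def abs_mult mult_right_mono)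
next
  case False
  then have "exp (\<beta> (i - m) * t) \<le> exp t"
    using assms(2,4) mult_right_mono[of "\<beta> (i - m)" 1 t] by simp
  with False assms(1) show ?thesis by (simp add: gvec_def abs_mult mult_right_mono)
qed

locale admissible_radius =
  fixes m n :: nat and \<alpha> \<beta> :: "nat \<Rightarrow> real" and r :: real
  assumes m_pos: "0 < m"
    and alpha_nonneg: "\<And>i. i < m \<Longrightarrow> 0 \<le> \<alpha> i"
    and beta_le_one: "\<And>j. j < n \<Longrightarrow> \<beta> j \<le> 1"
    and r_pos: "0 < r"
    and r_less_exp: "r < exp (- 4)"
    and alpha_0_large: "r + r / (2 * real (m + n)) < \<alpha> 0 / 2"
begin

lemma r_less_half: "r < 1 / 2"
proof -
  have "5 \<le> exp (4::real)" using exp_ge_add_one_self[of 4] by simp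
  then have "exp (- 4 :: real) \<le> 1 / 5" by (simp add: exp_minus field_simps)
  with r_less_exp show ?thesis by simp
qed

lemma exp_mult_sqrt_r_less:
  assumes "t \<le> ln (1 / r) / 4 + 1 / 2"
  shows "exp t * sqrt r < exp (- r)"
proof -
  have "ln r < - 4" using r_pos r_less_exp by (metis ln_exp ln_less_cancel_iff exp_gt_zero)
  have "exp t * sqrt r = exp (t + ln r / 2)"
    using r_pos by (simp add: exp_add ln_sqrt[symmetric])
  also have "t + ln r / 2 < - r"
    using assms \<open>ln r < - 4\<close> r_less_half r_pos by (simp add: ln_div)
  finally show ?thesis by simp
qed

context
  fixes w :: "real vec" and t :: real
  assumes w: "w \<in> Rbox (m + n) r" and t: "1 / 2 < t" "t \<le> ln (1 / r) / 4 + 1 / 2"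
begin

lemma dim_Rbox_vec: "dim_vec w = m + n"
  using w unfolding Rbox_def by auto

lemma gvec_neg_Rbox_nth_0: "0 < gvec m \<alpha> \<beta> (- t) w $ 0" "gvec m \<alpha> \<beta> (- t) w $ 0 < exp (- r)"
proof -
  let ?e = "r / (2 * real (m + n))"
  have w0: "1 - ?e < w $ 0" "w $ 0 < 1 + ?e" using w unfolding Rbox_def by auto
  have "?e < 1" using r_less_half m_pos by (simp add: field_simps)
  with w0 have "0 < w $ 0" by simp
  have u0: "gvec m \<alpha> \<beta> (- t) w $ 0 = exp (- (\<alpha> 0 * t)) * w $ 0"
    using m_pos dim_Rbox_vec by (simp add: gvec_def)
  then show "0 < gvec m \<alpha> \<beta> (- t) w $ 0" using \<open>0 < w $ 0\<close> by simp
  have "0 \<le> ?e" using r_pos by simp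
  then have "0 < \<alpha> 0" using alpha_0_large r_pos by linarith
  with t have "\<alpha> 0 / 2 < \<alpha> 0 * t" by simp
  then have "exp (- (\<alpha> 0 * t)) < exp (- r - ?e)" using alpha_0_large by simp
  moreover have "w $ 0 < exp ?e" using w0 by (smt (verit) exp_ge_add_one_self)
  ultimately have "gvec m \<alpha> \<beta> (- t) w $ 0 < exp (- r - ?e) * exp ?e"
    unfolding u0 using \<open>0 < w $ 0\<close> by (intro mult_strict_mono) auto
  also have "\<dots> = exp (- r)" by (metis diff_add_cancel exp_add)
  finally show "gvec m \<alpha> \<beta> (- t) w $ 0 < exp (- r)" .
qed

lemma abs_gvec_neg_Rbox_nth_less:
  assumes i: "0 < i" "i < m + n"
  shows "\<bar>gvec m \<alpha> \<beta> (- t) w $ i\<bar> < exp (- r)"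
proof -
  have "- sqrt r < w $ i \<and> w $ i < sqrt r" using w i unfolding Rbox_def by auto
  then have "\<bar>w $ i\<bar> < sqrt r" by linarith
  have "\<bar>gvec m \<alpha> \<beta> (- t) w $ i\<bar> \<le> exp t * \<bar>w $ i\<bar>"
    using t(1) i dim_Rbox_vec alpha_nonneg beta_le_one by (intro abs_gvec_neg_nth_le) auto
  also have "\<dots> < exp t * sqrt r" using \<open>\<bar>w $ i\<bar> < sqrt r\<close> by simp
  also have "\<dots> < exp (- r)" using t(2) by (rule exp_mult_sqrt_r_less)
  finally show ?thesis .
qed

lemma gvec_neg_Rbox_short:
  defines "u \<equiv> gvec m \<alpha> \<beta> (- t) w"
  shows "u \<noteq> 0\<^sub>v (dim_vec u)" and "supnorm u < exp (- r)"
proof -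
  have dim: "dim_vec u = m + n" "0 < m + n" unfolding u_def using dim_Rbox_vec m_pos by auto
  show "u \<noteq> 0\<^sub>v (dim_vec u)" using gvec_neg_Rbox_nth_0(1) dim unfolding u_def by auto
  show "supnorm u < exp (- r)"
  proof (rule supnorm_less)
    fix i assume "i < dim_vec u"
    then show "\<bar>u $ i\<bar> < exp (- r)"
      using gvec_neg_Rbox_nth_0 abs_gvec_neg_Rbox_nth_less dim unfolding u_def
      by (cases "i = 0") auto
  qed (use dim in simp)
qed

end

lemma glat_neg_DeltaPrime_notin:
  assumes L: "L \<in> DeltaPrime (m + n) r" and t: "1 / 2 < t" "t \<le> ln (1 / r) / 4 + 1 / 2"
  shows "glat m \<alpha> \<beta> (- t) L \<notin> DeltaPrime (m + n) r"
proof
  assume L': "glat m \<alpha> \<beta> (- t) L \<in> DeltaPrime (m + n) r"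
  obtain w where "w \<in> L" and w: "w \<in> Rbox (m + n) r"
    using L unfolding DeltaPrime_def hits_def by auto
  define u where "u = gvec m \<alpha> \<beta> (- t) w"
  have "u \<in> glat m \<alpha> \<beta> (- t) L" unfolding u_def glat_def using \<open>w \<in> L\<close> by blast
  with L' gvec_neg_Rbox_short(1)[OF w t] have "exp (- Delta (glat m \<alpha> \<beta> (- t) L)) \<le> supnorm u"
    unfolding u_def DeltaPrime_def by (intro exp_neg_Delta_le_supnorm) auto
  also have "\<dots> < exp (- r)" unfolding u_def by (rule gvec_neg_Rbox_short(2)[OF w t])
  finally have "r < Delta (glat m \<alpha> \<beta> (- t) L)" by simp
  with L' show False unfolding DeltaPrime_def by simp
qed

lemma glat_DeltaTilde_disjoint:
  assumes "1 \<le> b - a" "b - a \<le> ln (1 / r) / 4"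
  shows "glat m \<alpha> \<beta> a ` DeltaTilde m \<alpha> \<beta> n r \<inter> glat m \<alpha> \<beta> b ` DeltaTilde m \<alpha> \<beta> n r = {}"
proof -
  have "glat m \<alpha> \<beta> a (glat m \<alpha> \<beta> (- s\<^sub>1) L\<^sub>1) \<noteq> glat m \<alpha> \<beta> b (glat m \<alpha> \<beta> (- s\<^sub>2) L\<^sub>2)"
    if s: "s\<^sub>1 \<in> {0..<1/2}" "s\<^sub>2 \<in> {0..<1/2}"
      and L: "L\<^sub>1 \<in> DeltaPrime (m + n) r" "L\<^sub>2 \<in> DeltaPrime (m + n) r" for s\<^sub>1 s\<^sub>2 L\<^sub>1 L\<^sub>2
  proof
    define t where "t = (b - s\<^sub>2) - (a - s\<^sub>1)"
    assume "glat m \<alpha> \<beta> a (glat m \<alpha> \<beta> (- s\<^sub>1) L\<^sub>1) = glat m \<alpha> \<beta> b (glat m \<alpha> \<beta> (- s\<^sub>2) L\<^sub>2)"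
    then have "glat m \<alpha> \<beta> (s\<^sub>2 - b) (glat m \<alpha> \<beta> a (glat m \<alpha> \<beta> (- s\<^sub>1) L\<^sub>1)) =
        glat m \<alpha> \<beta> (s\<^sub>2 - b) (glat m \<alpha> \<beta> b (glat m \<alpha> \<beta> (- s\<^sub>2) L\<^sub>2))" by simp
    then have "L\<^sub>2 = glat m \<alpha> \<beta> (- t) L\<^sub>1" unfolding glat_add t_def by (simp add: algebra_simps)
    moreover have "glat m \<alpha> \<beta> (- t) L\<^sub>1 \<notin> DeltaPrime (m + n) r"
      using L(1) s assms unfolding t_def by (intro glat_neg_DeltaPrime_notin) auto
    ultimately show False using L(2) by simp
  qed
  then show ?thesis unfolding DeltaTilde_def by blast
qed

end

lemma admissible_radiusI:
  assumes "1 \<le> m" "\<forall>i < m. \<alpha> i > 0" "\<forall>j < n. \<beta> j > 0" "(\<Sum>j<n. \<beta> j) = 1" "0 < r"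
    and "r < real (m + n) * Min (\<alpha> ` {..<m}) / (2 * real (m + n) + 1)" "r < exp (- 4)"
  shows "admissible_radius m n \<alpha> \<beta> r"
proof
  show "\<beta> j \<le> 1" if "j < n" for j
    using assms(3,4) that member_le_sum[of j "{..<n}" \<beta>] by (simp add: less_imp_le)
  have "Min (\<alpha> ` {..<m}) \<le> \<alpha> 0" using assms(1) by (intro Min_le) auto
  moreover have "r * (2 * real (m + n) + 1) < real (m + n) * Min (\<alpha> ` {..<m})"
    using assms(6) by (simp add: field_simps)
  ultimately have "r * (2 * real (m + n) + 1) < real (m + n) * \<alpha> 0"
    by (smt (verit) mult_left_mono of_nat_0_le_iff)
  then show "r + r / (2 * real (m + n)) < \<alpha> 0 / 2"
    using assms(1) by (simp add: field_simps)
qed (use assms in auto)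

theorem proposition4p4:
  fixes m n :: nat and \<alpha> \<beta> :: "nat \<Rightarrow> real" and r :: real and J :: int and k0 :: int
  assumes "m \<ge> 1" and "n \<ge> 1"
    and "\<forall>i < m. \<alpha> i > 0" and "(\<Sum>i<m. \<alpha> i) = 1"
    and "\<forall>j < n. \<beta> j > 0" and "(\<Sum>j<n. \<beta> j) = 1"
    and "0 < r"
    and "r < real (m + n) * Min (\<alpha> ` {..<m}) / (2 * real (m + n) + 1)"
    and "r < Min (\<beta> ` {..<n}) / 2"
    and "r < exp (- 4)"
    and "J = \<lfloor>ln (1 / r) / 4\<rfloor>"
  shows "\<forall>k1 \<in> {k0..k0 + J}. \<forall>k2 \<in> {k0..k0 + J}. k1 \<noteq> k2 \<longrightarrow>
           glat m \<alpha> \<beta> (real_of_int k1) ` DeltaTilde m \<alpha> \<beta> n r \<inter>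
           glat m \<alpha> \<beta> (real_of_int k2) ` DeltaTilde m \<alpha> \<beta> n r = {}"
proof -
  interpret admissible_radius m n \<alpha> \<beta> r
    using assms by (intro admissible_radiusI) auto
  have "real_of_int J \<le> ln (1 / r) / 4" using assms(11) by linarith
  then have disjoint: "glat m \<alpha> \<beta> k ` DeltaTilde m \<alpha> \<beta> n r \<inter> glat m \<alpha> \<beta> l ` DeltaTilde m \<alpha> \<beta> n r = {}"
    if "k < l" "k \<in> {k0..k0 + J}" "l \<in> {k0..k0 + J}" for k l :: int
    using that by (intro glat_DeltaTilde_disjoint) auto
  show ?thesis by (metis Int_commute disjoint linorder_neq_iff)
qed

end
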